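(* Let $A$ be a uniformly distributed random point on the unit sphere in $\mathbb{R}^3$, let $B=(1,0,0)$ and $C=(0,1,0)$, and let $$\alpha=\arccos\!\left(\frac{(A\times B)\cdot(A\times C)}{\|A\times B\|\,\|A\times C\|}\right)\in[0,\pi]$$ (the dihedral angle along the line through the origin and $A$ between the planes containing $B$ and $C$; defined almost surely). Then $$\mathbb{E}(\alpha)=\frac{\pi}{2},\qquad \mathbb{E}(\alpha^2)=\frac{\pi^2}{4}+\ln(2)^2.$$
   Context: Uniform distribution on the sphere means with respect to normalized surface area measure. Equivalently, $\alpha$ is the angle at vertex $A$ of the spherical triangle $ABC$, whose opposite side has length $\pi/2$. *)

theory Defs
  imports "HOL-Analysis.Analysis" "HOL-Analysis.Cross3"
begin

text \<open>Normalized surface measure (uniform probability distribution) on the unit sphere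
  in R^3, realized as the cone measure: the image of the uniform probability measure
  on the open unit ball under radial projection x \<mapsto> x / |x|.  (The origin, a null
  set, is mapped to 0; this does not affect the distribution.)\<close>
definition sphere_uniform :: "(real^3) measure" where
  "sphere_uniform = distr (uniform_measure lborel (ball 0 1)) lborel (\<lambda>x. x /\<^sub>R norm x)"

definition dihedral_angle :: "real^3 \<Rightarrow> real^3 \<Rightarrow> real^3 \<Rightarrow> real" where
  "dihedral_angle A B C =
     arccos ((cross3 A B \<bullet> cross3 A C) / (norm (cross3 A B) * norm (cross3 A C)))"

end

(*
  Write A = (c, b, a).  Off the null set a = 0 the dihedral angle is
  pi/2 + arctan (c b / (|a| |A|)); it does not change under A |-> A / |A|, so the sphere
  average is an average over the unit ball.  There substitute c = rho u / sqrt (1 - u^2) with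
  rho^2 = a^2 + b^2 (a map of the chord c^2 + rho^2 < 1 onto itself), then b = |a| t, and
  integrate out a: the angle has the law of pi/2 + arctan (U T) with U uniform on (-1, 1) and
  T standard Cauchy, independent.  Replacing U by -U shows that alpha and pi - alpha have the
  same law, so E alpha = pi/2.  For the second moment, E (alpha - pi/2)^2 = E arctan (U T)^2.
  Writing arctan (u t) as the integral of t / (1 + s^2 t^2) over 0 <= s <= u turns this into a
  fourfold integral whose t-integral is pi / (2 (1 + s) (1 + r) (s + r)) by partial fractions;
  the remaining integrals over 0 <= r <= s <= u < 1 are elementary and give (ln 2)^2.
*)

theory Submission
  imports Defs "HOL-Probability.Probability_Measure"
begin

section \<open>The dihedral angle in coordinates\<close>

lemma abs_dihedral_cos_le_1:
  "\<bar>(cross3 A B \<bullet> cross3 A C) / (norm (cross3 A B) * norm (cross3 A C))\<bar> \<le> 1"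
proof (cases "norm (cross3 A B) * norm (cross3 A C) = 0")
  case False
  then show ?thesis
    using Cauchy_Schwarz_ineq2[of "cross3 A B" "cross3 A C"] by (simp add: abs_div)
next
  case True
  show ?thesis unfolding True by simp
qed

lemma dihedral_angle_bounds: "0 \<le> dihedral_angle A B C" "dihedral_angle A B C \<le> pi"
  using abs_dihedral_cos_le_1[of A B C, unfolded abs_le_iff] unfolding dihedral_angle_def
  by (auto intro!: arccos_lbound arccos_ubound)

lemma borel_measurable_dihedral_angle [measurable]:
  "(\<lambda>A. dihedral_angle A B C) \<in> borel_measurable borel"
proof -
  define clamp :: "real \<Rightarrow> real" where "clamp y = max (-1) (min 1 y)" for y
  have [measurable]: "(\<lambda>y. arccos (clamp y)) \<in> borel_measurable borel"
    unfolding clamp_def by (intro borel_measurable_continuous_onI continuous_intros) auto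
  have [measurable]: "(\<lambda>A. cross3 A X) \<in> borel_measurable borel" for X
    by (intro borel_measurable_continuous_onI continuous_on_cross continuous_intros)
  have "dihedral_angle A B C =
          arccos (clamp ((cross3 A B \<bullet> cross3 A C) / (norm (cross3 A B) * norm (cross3 A C))))" for A
    using abs_dihedral_cos_le_1[of A B C, unfolded abs_le_iff]
    by (simp add: dihedral_angle_def clamp_def min_absorb2 max_absorb2)
  then show ?thesis by simp
qed

lemma dihedral_angle_scaleR_left:
  assumes "c \<noteq> 0"
  shows "dihedral_angle (c *\<^sub>R A) B C = dihedral_angle A B C"
proof -
  have "cross3 (c *\<^sub>R A) B \<bullet> cross3 (c *\<^sub>R A) C = (c*c) * (cross3 A B \<bullet> cross3 A C)"
    by (simp add: cross_mult_left)
  moreover have "norm (cross3 (c *\<^sub>R A) B) * norm (cross3 (c *\<^sub>R A) C)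
      = (c*c) * (norm (cross3 A B) * norm (cross3 A C))"
    by (simp add: cross_mult_left)
  ultimately show ?thesis
    using assms by (simp only: dihedral_angle_def mult_divide_mult_cancel_left_if) simp
qed

lemma dihedral_angle_normalize: "dihedral_angle (A /\<^sub>R norm A) B C = dihedral_angle A B C"
  by (cases "A = 0") (simp_all add: dihedral_angle_scaleR_left)

lemma dihedral_angle_e1_e2_arctan:
  fixes p q r :: real
  assumes "r \<noteq> 0"
  shows "dihedral_angle (vector [p, q, r]) (vector [1, 0, 0]) (vector [0, 1, 0])
           = pi/2 + arctan (p*q / (\<bar>r\<bar> * sqrt (p\<^sup>2 + q\<^sup>2 + r\<^sup>2)))"
proof -
  define X where "X = sqrt (q\<^sup>2 + r\<^sup>2)"
  define Y where "Y = sqrt (p\<^sup>2 + r\<^sup>2)"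
  define s where "s = -(p*q) / (X*Y)"
  have X: "X > 0" and Y: "Y > 0"
    using assms unfolding X_def Y_def by (simp_all add: add_nonneg_pos)
  have angle: "dihedral_angle (vector [p, q, r]) (vector [1, 0, 0]) (vector [0, 1, 0]) = arccos s"
    unfolding dihedral_angle_def s_def X_def Y_def
    by (simp add: cross3_def inner_vec_def sum_3 norm_vec_def L2_set_def power2_eq_square
        mult_ac add_ac)
  have "1 - s\<^sup>2 = ((X*Y)\<^sup>2 - (p*q)\<^sup>2) / (X*Y)\<^sup>2"
    using X Y by (simp add: s_def power_divide field_simps)
  also have "(X*Y)\<^sup>2 - (p*q)\<^sup>2 = r\<^sup>2 * (p\<^sup>2 + q\<^sup>2 + r\<^sup>2)"
    unfolding X_def Y_def by (simp add: power_mult_distrib algebra_simps)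
  finally have one_minus: "1 - s\<^sup>2 = r\<^sup>2 * (p\<^sup>2 + q\<^sup>2 + r\<^sup>2) / (X*Y)\<^sup>2" .
  have "r\<^sup>2 * (p\<^sup>2 + q\<^sup>2 + r\<^sup>2) > 0"
    using assms by (intro mult_pos_pos) (auto intro: add_nonneg_pos)
  then have "r\<^sup>2 * (p\<^sup>2 + q\<^sup>2 + r\<^sup>2) / (X*Y)\<^sup>2 > 0"
    using X Y by simp
  then have "s\<^sup>2 < 1"
    using one_minus by linarith
  then have s: "-1 < s" "s < 1"
    by (simp_all add: abs_square_less_1 abs_less_iff)
  have "sqrt (1 - s\<^sup>2) = \<bar>r\<bar> * sqrt (p\<^sup>2 + q\<^sup>2 + r\<^sup>2) / (X*Y)"
    using X Y unfolding one_minus by (simp add: real_sqrt_divide real_sqrt_mult)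
  then have "-s / sqrt (1 - s\<^sup>2) = p*q / (\<bar>r\<bar> * sqrt (p\<^sup>2 + q\<^sup>2 + r\<^sup>2))"
    using X Y by (simp add: s_def field_simps)
  then show ?thesis
    using s by (simp add: angle arccos_arctan arctan_minus[symmetric])
qed

section \<open>Integration over the sphere and over the ball\<close>

lemma sets_sphere_uniform [measurable_cong]: "sets sphere_uniform = sets borel"
  by (simp add: sphere_uniform_def)

lemma emeasure_unit_ball_3: "emeasure lborel (ball (0::real^3) 1) = ennreal (4/3 * pi)"
  by (simp add: emeasure_ball unit_ball_vol_3)

lemma prob_space_sphere_uniform: "prob_space sphere_uniform"
proof -
  have "prob_space (uniform_measure lborel (ball (0::real^3) 1))"
    by (intro prob_space_uniform_measure) (simp_all add: emeasure_unit_ball_3)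
  then show ?thesis
    unfolding sphere_uniform_def by (rule prob_space.prob_space_distr) simp
qed

lemma nn_integral_sphere_uniform:
  assumes [measurable]: "f \<in> borel_measurable borel"
  shows "(\<integral>\<^sup>+A. f A \<partial>sphere_uniform)
           = ennreal (3 / (4*pi)) * (\<integral>\<^sup>+x. f (x /\<^sub>R norm x) * indicator (ball 0 1) x \<partial>lborel)"
proof -
  have "(\<integral>\<^sup>+A. f A \<partial>sphere_uniform) = (\<integral>\<^sup>+x. f (x /\<^sub>R norm x) \<partial>uniform_measure lborel (ball 0 1))"
    unfolding sphere_uniform_def by (subst nn_integral_distr) simp_all
  also have "\<dots> = (\<integral>\<^sup>+x. f (x /\<^sub>R norm x) * indicator (ball 0 1) x \<partial>lborel) / ennreal (4/3 * pi)"
    by (subst nn_integral_uniform_measure) (simp_all add: emeasure_unit_ball_3)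
  also have "\<dots> = (\<integral>\<^sup>+x. f (x /\<^sub>R norm x) * indicator (ball 0 1) x \<partial>lborel) * (1 / ennreal (4/3 * pi))"
    by (simp add: ennreal_times_divide)
  also have "1 / ennreal (4/3 * pi) = ennreal (3 / (4*pi))"
    using divide_ennreal[of 1 "4/3 * pi"] by simp
  also have "(\<integral>\<^sup>+x. f (x /\<^sub>R norm x) * indicator (ball 0 1) x \<partial>lborel) * ennreal (3 / (4*pi))
      = ennreal (3 / (4*pi)) * (\<integral>\<^sup>+x. f (x /\<^sub>R norm x) * indicator (ball 0 1) x \<partial>lborel)"
    by (rule mult.commute)
  finally show ?thesis .
qed

lemma borel_measurable_vector3 [measurable (raw)]:
  fixes f g h :: "'a \<Rightarrow> real"
  assumes [measurable]: "f \<in> borel_measurable M" "g \<in> borel_measurable M" "h \<in> borel_measurable M"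
  shows "(\<lambda>x. vector [f x, g x, h x] :: real^3) \<in> borel_measurable M"
proof -
  have "(\<lambda>x. vector [f x, g x, h x] :: real^3)
      = (\<lambda>x. f x *\<^sub>R axis 1 1 + g x *\<^sub>R axis 2 1 + h x *\<^sub>R axis 3 1)"
    by (auto simp: vec_eq_iff forall_3 vector_3 axis_def)
  then show ?thesis
    by simp
qed

lemma lborel_vec3_eq_distr:
  "distr (lborel \<Otimes>\<^sub>M lborel \<Otimes>\<^sub>M lborel) borel (\<lambda>(x3, x2, x1). vector [x1, x2, x3])
     = (lborel :: (real^3) measure)"
proof (rule lborel_eqI[symmetric])
  fix l u :: "real^3"
  assume le: "\<And>b. b \<in> Basis \<Longrightarrow> l \<bullet> b \<le> u \<bullet> b"
  have le': "l$i \<le> u$i" for i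
    using le[of "axis i 1"] by (auto simp: Basis_vec_def inner_axis)
  have Basis_3: "(Basis :: (real^3) set) = {axis 1 1, axis 2 1, axis 3 1}"
    by (auto simp: Basis_vec_def UNIV_3)
  let ?I = "\<lambda>i. {l$i<..<u$i}"
  have "(\<lambda>(x3, x2, x1). vector [x1, x2, x3]) -` box l u = Sigma (?I 3) (\<lambda>_. Sigma (?I 2) (\<lambda>_. ?I 1))"
    by (auto simp: box_def Basis_3 inner_axis vector_3)
  then have "emeasure (distr (lborel \<Otimes>\<^sub>M lborel \<Otimes>\<^sub>M lborel) borel (\<lambda>(x3, x2, x1). vector [x1, x2, x3])) (box l u)
      = emeasure (lborel \<Otimes>\<^sub>M (lborel \<Otimes>\<^sub>M lborel)) (Sigma (?I 3) (\<lambda>_. Sigma (?I 2) (\<lambda>_. ?I 1)))"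
    by (subst emeasure_distr) (simp_all add: split_beta' space_pair_measure)
  also have "\<dots> = emeasure (lborel \<Otimes>\<^sub>M (lborel :: (real \<times> real) measure)) (Sigma (?I 3) (\<lambda>_. Sigma (?I 2) (\<lambda>_. ?I 1)))"
    by (simp only: lborel_prod)
  also have "\<dots> = emeasure lborel (?I 3) * emeasure (lborel :: (real \<times> real) measure) (Sigma (?I 2) (\<lambda>_. ?I 1))"
    by (rule lborel.emeasure_pair_measure_Times) (auto intro!: borel_open open_Times)
  also have "emeasure (lborel :: (real \<times> real) measure) (Sigma (?I 2) (\<lambda>_. ?I 1))
      = emeasure lborel (?I 2) * emeasure lborel (?I 1)"
    by (simp add: lborel_prod[symmetric] lborel.emeasure_pair_measure_Times)
  also have "emeasure lborel (?I 3) * (emeasure lborel (?I 2) * emeasure lborel (?I 1))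
      = (\<Prod>b\<in>Basis. (u - l) \<bullet> b)"
    using le'[of 1] le'[of 2] le'[of 3]
    by (simp add: Basis_3 inner_axis axis_eq_axis ennreal_mult' prod_nonneg mult_ac)
  finally show "emeasure (distr (lborel \<Otimes>\<^sub>M lborel \<Otimes>\<^sub>M lborel) borel (\<lambda>(x3, x2, x1). vector [x1, x2, x3])) (box l u)
      = (\<Prod>b\<in>Basis. (u - l) \<bullet> b)" .
qed simp

lemma nn_integral_lborel_vec3:
  assumes [measurable]: "h \<in> borel_measurable (borel :: (real^3) measure)"
  shows "(\<integral>\<^sup>+x. h x \<partial>lborel) = (\<integral>\<^sup>+x3. \<integral>\<^sup>+x2. \<integral>\<^sup>+x1. h (vector [x1, x2, x3]) \<partial>lborel \<partial>lborel \<partial>lborel)"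
proof -
  have lborel2: "sigma_finite_measure (lborel \<Otimes>\<^sub>M (lborel :: real measure))"
    by (simp add: lborel_prod lborel.sigma_finite_measure_axioms)
  have "(\<integral>\<^sup>+x. h x \<partial>lborel)
      = (\<integral>\<^sup>+p. h (vector [snd (snd p), fst (snd p), fst p]) \<partial>(lborel \<Otimes>\<^sub>M lborel \<Otimes>\<^sub>M lborel))"
    by (subst lborel_vec3_eq_distr[symmetric]) (simp add: nn_integral_distr split_beta')
  also have "\<dots> = (\<integral>\<^sup>+x3. \<integral>\<^sup>+q. h (vector [snd q, fst q, x3]) \<partial>(lborel \<Otimes>\<^sub>M lborel) \<partial>lborel)"
    by (subst sigma_finite_measure.nn_integral_fst[OF lborel2, symmetric]) simp_all
  also have "\<dots> = (\<integral>\<^sup>+x3. \<integral>\<^sup>+x2. \<integral>\<^sup>+x1. h (vector [x1, x2, x3]) \<partial>lborel \<partial>lborel \<partial>lborel)"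
    by (intro nn_integral_cong) (simp add: lborel.nn_integral_fst[symmetric])
  finally show ?thesis .
qed

section \<open>The angle as \<open>pi/2 + arctan (U T)\<close>\<close>

lemma nn_integral_open_interval_eq_closed:
  fixes f :: "real \<Rightarrow> real"
  shows "(\<integral>\<^sup>+x. ennreal (f x * indicator {a<..<b} x) \<partial>lborel)
       = (\<integral>\<^sup>+x. ennreal (f x * indicator {a..b} x) \<partial>lborel)"
proof (rule nn_integral_cong_AE)
  have "AE x in lborel. x \<noteq> a" "AE x in lborel. x \<noteq> b"
    by (rule AE_lborel_singleton)+
  then show "AE x in lborel. ennreal (f x * indicator {a<..<b} x) = ennreal (f x * indicator {a..b} x)"
    by eventually_elim (auto simp: indicator_def)
qed

lemma power2_less_iff_abs_less:
  fixes x r :: real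
  assumes "0 \<le> r"
  shows "x\<^sup>2 < r\<^sup>2 \<longleftrightarrow> -r < x \<and> x < r"
proof -
  have "x\<^sup>2 < r\<^sup>2 \<longleftrightarrow> \<not> \<bar>r\<bar> \<le> \<bar>x\<bar>"
    by (simp add: abs_le_square_iff not_le)
  then show ?thesis
    using assms by (auto simp: abs_less_iff)
qed

lemma DERIV_chord_parametrization:
  fixes \<rho> u :: real
  assumes "0 < 1 - u\<^sup>2"
  shows "((\<lambda>u. \<rho> * u / sqrt (1 - u\<^sup>2)) has_real_derivative \<rho> / ((1 - u\<^sup>2) * sqrt (1 - u\<^sup>2))) (at u)"
proof -
  define w where "w = sqrt (1 - u\<^sup>2)"
  have w: "0 < w" "w\<^sup>2 = 1 - u\<^sup>2"
    using assms by (simp_all add: w_def)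
  have "u * u + w * w = 1"
    using w(2) by (simp add: power2_eq_square)
  then have "\<rho> * (u * u) + \<rho> * (w * w) = \<rho>"
    by (simp add: distrib_left[symmetric])
  then have "(\<rho> * w - \<rho> * u * (inverse w / 2 * (- (2 * u)))) / w\<^sup>2 = \<rho> / ((1 - u\<^sup>2) * sqrt (1 - u\<^sup>2))"
    unfolding w_def[symmetric] w(2)[symmetric] using w
    by (simp add: field_simps power2_eq_square)
  moreover have "((\<lambda>u. \<rho> * u / sqrt (1 - u\<^sup>2)) has_real_derivative
      (\<rho> * w - \<rho> * u * (inverse w / 2 * (- (2 * u)))) / w\<^sup>2) (at u)"
    unfolding w_def using w by (auto intro!: derivative_eq_intros simp: w_def power2_eq_square)
  ultimately show ?thesis
    by simp
qed

lemma nn_integral_chord_substitution: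
  fixes f :: "real \<Rightarrow> real" and \<rho> :: real
  assumes \<rho>: "0 < \<rho>" and [measurable]: "f \<in> borel_measurable borel"
  shows "(\<integral>\<^sup>+c. ennreal (f c * indicator {c. c\<^sup>2 + \<rho>\<^sup>2 < 1} c) \<partial>lborel)
       = (\<integral>\<^sup>+u. ennreal (f (\<rho> * u / sqrt (1 - u\<^sup>2)) * (\<rho> / ((1 - u\<^sup>2) * sqrt (1 - u\<^sup>2)))
                  * indicator {u. u\<^sup>2 + \<rho>\<^sup>2 < 1} u) \<partial>lborel)"
proof (cases "\<rho> < 1")
  case False
  then have "{x. x\<^sup>2 + \<rho>\<^sup>2 < 1} = {}"
    using \<rho> by (auto simp: not_less) (smt (verit) one_le_power zero_le_power2)
  then show ?thesis by simp
next
  case True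
  define K where "K = sqrt (1 - \<rho>\<^sup>2)"
  define g where "g u = \<rho> * u / sqrt (1 - u\<^sup>2)" for u
  define g' where "g' u = \<rho> / ((1 - u\<^sup>2) * sqrt (1 - u\<^sup>2))" for u
  have K: "0 < K" "K < 1" "K\<^sup>2 = 1 - \<rho>\<^sup>2"
    using \<rho> True by (auto simp: K_def power_less_one_iff power_le_one)
  have "x\<^sup>2 + \<rho>\<^sup>2 < 1 \<longleftrightarrow> -K < x \<and> x < K" for x
  proof -
    have "x\<^sup>2 + \<rho>\<^sup>2 < 1 \<longleftrightarrow> x\<^sup>2 < K\<^sup>2"
      using K(3) by linarith
    also have "\<dots> \<longleftrightarrow> -K < x \<and> x < K"
      using K(1) by (intro power2_less_iff_abs_less) simp
    finally show ?thesis .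
  qed
  then have chord: "{x. x\<^sup>2 + \<rho>\<^sup>2 < 1} = {-K<..<K}"
    unfolding set_eq_iff greaterThanLessThan_iff mem_Collect_eq by blast
  have inside: "0 < 1 - u\<^sup>2" if "u \<in> {-K..K}" for u
    using that K by (auto simp: abs_square_less_1 abs_less_iff)
  have g_K: "g K = K" "g (-K) = -K"
    using K \<rho> by (simp_all add: g_def)
  have "(\<integral>\<^sup>+c. ennreal (f c * indicator {c. c\<^sup>2 + \<rho>\<^sup>2 < 1} c) \<partial>lborel)
      = (\<integral>\<^sup>+c. ennreal (f c * indicator {g (-K)..g K} c) \<partial>lborel)"
    unfolding chord g_K by (rule nn_integral_open_interval_eq_closed)
  also have "\<dots> = (\<integral>\<^sup>+u. ennreal (f (g u) * g' u * indicator {-K..K} u) \<partial>lborel)"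
  proof (rule nn_integral_substitution)
    show "(g has_real_derivative g' u) (at u)" if "u \<in> {-K..K}" for u
      unfolding g_def[abs_def] g'_def using inside[OF that] by (rule DERIV_chord_parametrization)
    show "continuous_on {-K..K} g'"
      unfolding g'_def using inside by (intro continuous_intros) (auto dest: inside)
    show "0 \<le> g' u" if "u \<in> {-K..K}" for u
      using inside[OF that] \<rho> by (simp add: g'_def)
  qed (use K in \<open>simp_all add: set_borel_measurable_def\<close>)
  also have "\<dots> = (\<integral>\<^sup>+u. ennreal (f (g u) * g' u * indicator {u. u\<^sup>2 + \<rho>\<^sup>2 < 1} u) \<partial>lborel)"
    unfolding chord by (rule nn_integral_open_interval_eq_closed[symmetric])
  finally show ?thesis by (simp add: g_def g'_def)
qed

lemma dihedral_angle_chord_substitution: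
  fixes F :: "real \<Rightarrow> real" and a b :: real
  assumes [measurable]: "F \<in> borel_measurable borel" and a: "a \<noteq> 0"
  defines "\<rho> \<equiv> sqrt (b\<^sup>2 + a\<^sup>2)"
  shows "(\<integral>\<^sup>+c. ennreal (F (dihedral_angle (vector [c, b, a]) (vector [1, 0, 0]) (vector [0, 1, 0]))
                        * indicator {c. c\<^sup>2 + \<rho>\<^sup>2 < 1} c) \<partial>lborel)
       = (\<integral>\<^sup>+u. ennreal (F (pi/2 + arctan (u * b / \<bar>a\<bar>)) * (\<rho> / ((1 - u\<^sup>2) * sqrt (1 - u\<^sup>2)))
                        * indicator {u. u\<^sup>2 + \<rho>\<^sup>2 < 1} u) \<partial>lborel)"
proof -
  have \<rho>: "0 < \<rho>" "\<rho>\<^sup>2 = b\<^sup>2 + a\<^sup>2"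
    using a by (simp_all add: \<rho>_def add_nonneg_pos)
  have angle: "dihedral_angle (vector [\<rho> * u / sqrt (1 - u\<^sup>2), b, a]) (vector [1, 0, 0]) (vector [0, 1, 0])
      = pi/2 + arctan (u * b / \<bar>a\<bar>)" if "u\<^sup>2 + \<rho>\<^sup>2 < 1" for u
  proof -
    define w where "w = sqrt (1 - u\<^sup>2)"
    define c where "c = \<rho> * u / w"
    have "u\<^sup>2 < 1"
      using that zero_le_power2[of \<rho>] by linarith
    then have w: "0 < w" "w\<^sup>2 = 1 - u\<^sup>2"
      by (simp_all add: w_def)
    have "c\<^sup>2 + b\<^sup>2 + a\<^sup>2 = \<rho>\<^sup>2 * u\<^sup>2 / w\<^sup>2 + \<rho>\<^sup>2"
      by (simp add: c_def power_divide power_mult_distrib \<rho>(2))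
    also have "\<dots> = \<rho>\<^sup>2 * (u\<^sup>2 + w\<^sup>2) / w\<^sup>2"
      using w(1) by (simp add: field_simps)
    also have "\<dots> = (\<rho> / w)\<^sup>2"
      using w by (simp add: power_divide)
    finally have "c\<^sup>2 + b\<^sup>2 + a\<^sup>2 = (\<rho> / w)\<^sup>2" .
    then have "sqrt (c\<^sup>2 + b\<^sup>2 + a\<^sup>2) = \<rho> / w"
      using w \<rho> by simp
    then have "c * b / (\<bar>a\<bar> * sqrt (c\<^sup>2 + b\<^sup>2 + a\<^sup>2)) = (\<rho> * u / w) * b / (\<bar>a\<bar> * (\<rho> / w))"
      by (simp only: c_def)
    also have "\<dots> = u * b / \<bar>a\<bar>"
      using w(1) \<rho>(1) by (simp add: field_simps)
    finally have "c * b / (\<bar>a\<bar> * sqrt (c\<^sup>2 + b\<^sup>2 + a\<^sup>2)) = u * b / \<bar>a\<bar>" .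
    then show ?thesis
      using dihedral_angle_e1_e2_arctan[OF a, of c b] by (simp add: c_def w_def)
  qed
  have "(\<integral>\<^sup>+c. ennreal (F (dihedral_angle (vector [c, b, a]) (vector [1, 0, 0]) (vector [0, 1, 0]))
                        * indicator {c. c\<^sup>2 + \<rho>\<^sup>2 < 1} c) \<partial>lborel)
      = (\<integral>\<^sup>+u. ennreal (F (dihedral_angle (vector [\<rho> * u / sqrt (1 - u\<^sup>2), b, a]) (vector [1, 0, 0]) (vector [0, 1, 0]))
                        * (\<rho> / ((1 - u\<^sup>2) * sqrt (1 - u\<^sup>2))) * indicator {u. u\<^sup>2 + \<rho>\<^sup>2 < 1} u) \<partial>lborel)"
    using \<rho>(1) by (rule nn_integral_chord_substitution) measurable
  also have "\<dots> = (\<integral>\<^sup>+u. ennreal (F (pi/2 + arctan (u * b / \<bar>a\<bar>)) * (\<rho> / ((1 - u\<^sup>2) * sqrt (1 - u\<^sup>2)))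
                        * indicator {u. u\<^sup>2 + \<rho>\<^sup>2 < 1} u) \<partial>lborel)"
    by (intro nn_integral_cong) (simp add: angle indicator_def)
  finally show ?thesis .
qed

lemma dihedral_angle_slab_substitution:
  fixes F :: "real \<Rightarrow> real" and a :: real
  assumes [measurable]: "F \<in> borel_measurable borel" and a: "a \<noteq> 0"
  shows "(\<integral>\<^sup>+b. \<integral>\<^sup>+c. ennreal (F (dihedral_angle (vector [c, b, a]) (vector [1, 0, 0]) (vector [0, 1, 0]))
                        * indicator {c. c\<^sup>2 + b\<^sup>2 + a\<^sup>2 < 1} c) \<partial>lborel \<partial>lborel)
       = (\<integral>\<^sup>+t. \<integral>\<^sup>+u. ennreal (F (pi/2 + arctan (u * t)) * a\<^sup>2 * sqrt (1 + t\<^sup>2) / ((1 - u\<^sup>2) * sqrt (1 - u\<^sup>2))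
                        * of_bool (u\<^sup>2 + a\<^sup>2 * (1 + t\<^sup>2) < 1)) \<partial>lborel \<partial>lborel)"
proof -
  let ?J = "\<lambda>b u. ennreal (F (pi/2 + arctan (u * b / \<bar>a\<bar>)) * (sqrt (b\<^sup>2 + a\<^sup>2) / ((1 - u\<^sup>2) * sqrt (1 - u\<^sup>2)))
                        * indicator {u. u\<^sup>2 + (b\<^sup>2 + a\<^sup>2) < 1} u)"
  have "(\<integral>\<^sup>+b. \<integral>\<^sup>+c. ennreal (F (dihedral_angle (vector [c, b, a]) (vector [1, 0, 0]) (vector [0, 1, 0]))
                        * indicator {c. c\<^sup>2 + b\<^sup>2 + a\<^sup>2 < 1} c) \<partial>lborel \<partial>lborel)
      = (\<integral>\<^sup>+b. \<integral>\<^sup>+u. ?J b u \<partial>lborel \<partial>lborel)"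
  proof (rule nn_integral_cong)
    fix b :: real
    show "(\<integral>\<^sup>+c. ennreal (F (dihedral_angle (vector [c, b, a]) (vector [1, 0, 0]) (vector [0, 1, 0]))
                        * indicator {c. c\<^sup>2 + b\<^sup>2 + a\<^sup>2 < 1} c) \<partial>lborel) = (\<integral>\<^sup>+u. ?J b u \<partial>lborel)"
      using dihedral_angle_chord_substitution[OF assms(1) a, of b] by (simp add: add.assoc)
  qed
  also have "\<dots> = \<bar>a\<bar> * (\<integral>\<^sup>+t. \<integral>\<^sup>+u. ?J (0 + \<bar>a\<bar> * t) u \<partial>lborel \<partial>lborel)"
    using nn_integral_real_affine[of "\<lambda>b. \<integral>\<^sup>+u. ?J b u \<partial>lborel" "\<bar>a\<bar>" 0] a by simp
  also have "\<dots> = (\<integral>\<^sup>+t. \<integral>\<^sup>+u. \<bar>a\<bar> * ?J (\<bar>a\<bar> * t) u \<partial>lborel \<partial>lborel)"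
    by (simp add: nn_integral_cmult)
  also have "\<dots> = (\<integral>\<^sup>+t. \<integral>\<^sup>+u. ennreal (F (pi/2 + arctan (u * t)) * a\<^sup>2 * sqrt (1 + t\<^sup>2) / ((1 - u\<^sup>2) * sqrt (1 - u\<^sup>2))
                        * of_bool (u\<^sup>2 + a\<^sup>2 * (1 + t\<^sup>2) < 1)) \<partial>lborel \<partial>lborel)"
  proof (intro nn_integral_cong)
    fix t u :: real
    have "(\<bar>a\<bar> * t)\<^sup>2 + a\<^sup>2 = a\<^sup>2 * (1 + t\<^sup>2)"
      by (simp add: power_mult_distrib algebra_simps)
    then have "sqrt ((\<bar>a\<bar> * t)\<^sup>2 + a\<^sup>2) = \<bar>a\<bar> * sqrt (1 + t\<^sup>2)"
      by (simp add: real_sqrt_mult)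
    moreover have "u * (\<bar>a\<bar> * t) / \<bar>a\<bar> = u * t"
      using a by simp
    moreover have "u\<^sup>2 + (\<bar>a\<bar> * t)\<^sup>2 + a\<^sup>2 = u\<^sup>2 + a\<^sup>2 * (1 + t\<^sup>2)"
      by (simp add: power_mult_distrib algebra_simps)
    ultimately show "\<bar>a\<bar> * ?J (\<bar>a\<bar> * t) u = ennreal (F (pi/2 + arctan (u * t)) * a\<^sup>2 * sqrt (1 + t\<^sup>2)
                        / ((1 - u\<^sup>2) * sqrt (1 - u\<^sup>2)) * of_bool (u\<^sup>2 + a\<^sup>2 * (1 + t\<^sup>2) < 1))"
      by (cases "a < 0") (simp_all add: ennreal_mult'[symmetric] indicator_def abs_if power2_eq_square mult_ac)
  qed
  finally show ?thesis .
qed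

lemma nn_integral_power2_below:
  fixes p q :: real
  assumes p: "0 < p" and q: "0 < q"
  shows "(\<integral>\<^sup>+a. ennreal (a\<^sup>2 * of_bool (a\<^sup>2 * q < p)) \<partial>lborel) = ennreal (2/3 * (p * sqrt p) / (q * sqrt q))"
proof -
  define r where "r = sqrt (p / q)"
  have r: "0 \<le> r" "r\<^sup>2 = p / q"
    using p q by (simp_all add: r_def)
  have "a\<^sup>2 * q < p \<longleftrightarrow> a \<in> {-r<..<r}" for a
    using q power2_less_iff_abs_less[OF r(1)] by (simp add: r(2) less_divide_eq)
  then have "(\<integral>\<^sup>+a. ennreal (a\<^sup>2 * of_bool (a\<^sup>2 * q < p)) \<partial>lborel)
      = (\<integral>\<^sup>+a. ennreal (a\<^sup>2 * indicator {-r<..<r} a) \<partial>lborel)"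
    by (simp add: indicator_def)
  also have "\<dots> = (\<integral>\<^sup>+a. ennreal (a\<^sup>2) * indicator {-r..r} a \<partial>lborel)"
    by (subst nn_integral_open_interval_eq_closed) (auto intro!: nn_integral_cong split: split_indicator)
  also have "\<dots> = ennreal (r ^ 3 / 3 - (-r) ^ 3 / 3)"
    using r(1) by (intro nn_integral_FTC_Icc)
      (auto intro!: derivative_eq_intros simp: power2_eq_square power3_eq_cube)
  also have "r ^ 3 / 3 - (-r) ^ 3 / 3 = 2/3 * (p * sqrt p) / (q * sqrt q)"
    using p q by (simp add: r_def power3_eq_cube real_sqrt_divide field_simps)
  finally show ?thesis .
qed

lemma nn_integral_dihedral_height:
  fixes X t u :: real
  assumes X: "0 \<le> X"
  shows "(\<integral>\<^sup>+a. ennreal (X * a\<^sup>2 * sqrt (1 + t\<^sup>2) / ((1 - u\<^sup>2) * sqrt (1 - u\<^sup>2))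
                        * of_bool (u\<^sup>2 + a\<^sup>2 * (1 + t\<^sup>2) < 1)) \<partial>lborel)
       = ennreal (2/3) * ennreal (X / (1 + t\<^sup>2) * indicator {-1<..<1} u)"
proof (cases "u \<in> {-1<..<1}")
  case False
  then have "1 \<le> u\<^sup>2"
    using abs_le_square_iff[of 1 u] by auto
  moreover have "0 \<le> a\<^sup>2 * (1 + t\<^sup>2)" for a
    by (intro mult_nonneg_nonneg) simp_all
  ultimately have "\<not> u\<^sup>2 + a\<^sup>2 * (1 + t\<^sup>2) < 1" for a
    by (simp add: not_less add_increasing2)
  then show ?thesis
    using False by simp
next
  case True
  define P Q where "P = 1 - u\<^sup>2" and "Q = 1 + t\<^sup>2"
  define C where "C = X * sqrt Q / (P * sqrt P)"
  have P: "0 < P" and Q: "0 < Q"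
    using True by (simp_all add: P_def Q_def abs_square_less_1 abs_less_iff add_pos_nonneg)
  have C: "0 \<le> C"
    using X P Q by (simp add: C_def)
  have "(\<integral>\<^sup>+a. ennreal (X * a\<^sup>2 * sqrt (1 + t\<^sup>2) / ((1 - u\<^sup>2) * sqrt (1 - u\<^sup>2))
                        * of_bool (u\<^sup>2 + a\<^sup>2 * (1 + t\<^sup>2) < 1)) \<partial>lborel)
      = (\<integral>\<^sup>+a. ennreal C * ennreal (a\<^sup>2 * of_bool (a\<^sup>2 * Q < P)) \<partial>lborel)"
    using C by (intro nn_integral_cong)
      (simp add: P_def Q_def C_def ennreal_mult[symmetric] algebra_simps)
  also have "\<dots> = ennreal C * ennreal (2/3 * (P * sqrt P) / (Q * sqrt Q))"
    by (subst nn_integral_cmult) (simp_all add: nn_integral_power2_below P Q)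
  also have "\<dots> = ennreal (2/3) * ennreal (X / Q)"
    using C P Q X by (simp add: C_def ennreal_mult[symmetric] field_simps)
  finally show ?thesis
    using True by (simp add: Q_def)
qed

theorem nn_integral_sphere_uniform_dihedral_angle:
  fixes F :: "real \<Rightarrow> real"
  assumes [measurable]: "F \<in> borel_measurable borel" and F_nonneg: "\<And>x. 0 \<le> F x"
  shows "(\<integral>\<^sup>+A. ennreal (F (dihedral_angle A (vector [1, 0, 0]) (vector [0, 1, 0]))) \<partial>sphere_uniform)
       = ennreal (1 / (2*pi))
         * (\<integral>\<^sup>+t. \<integral>\<^sup>+u. ennreal (F (pi/2 + arctan (u * t)) / (1 + t\<^sup>2) * indicator {-1<..<1} u) \<partial>lborel \<partial>lborel)"
proof -
  let ?\<alpha> = "\<lambda>x. dihedral_angle x (vector [1, 0, 0]) (vector [0, 1, 0])"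
  let ?K = "\<lambda>a t u. ennreal (F (pi/2 + arctan (u * t)) * a\<^sup>2 * sqrt (1 + t\<^sup>2) / ((1 - u\<^sup>2) * sqrt (1 - u\<^sup>2))
                        * of_bool (u\<^sup>2 + a\<^sup>2 * (1 + t\<^sup>2) < 1))"
  let ?P = "\<lambda>t u. ennreal (F (pi/2 + arctan (u * t)) / (1 + t\<^sup>2) * indicator {-1<..<1} u)"
  have "(\<integral>\<^sup>+A. ennreal (F (?\<alpha> A)) \<partial>sphere_uniform)
      = ennreal (3 / (4*pi)) * (\<integral>\<^sup>+x. ennreal (F (?\<alpha> x)) * indicator (ball 0 1) x \<partial>lborel)"
    by (simp add: nn_integral_sphere_uniform dihedral_angle_normalize)
  also have "(\<integral>\<^sup>+x. ennreal (F (?\<alpha> x)) * indicator (ball 0 1) x \<partial>lborel)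
      = (\<integral>\<^sup>+a. \<integral>\<^sup>+b. \<integral>\<^sup>+c. ennreal (F (?\<alpha> (vector [c, b, a])) * indicator {c. c\<^sup>2 + b\<^sup>2 + a\<^sup>2 < 1} c)
           \<partial>lborel \<partial>lborel \<partial>lborel)"
    by (subst nn_integral_lborel_vec3, measurable)
      (auto intro!: nn_integral_cong simp: norm_vec_def L2_set_def sum_3 vector_3 split: split_indicator)
  also have "\<dots> = (\<integral>\<^sup>+a. \<integral>\<^sup>+t. \<integral>\<^sup>+u. ?K a t u \<partial>lborel \<partial>lborel \<partial>lborel)"
  proof (rule nn_integral_cong_AE)
    have "AE a in lborel. a \<noteq> (0::real)"
      by (rule AE_lborel_singleton)
    then show "AE a in lborel.
        (\<integral>\<^sup>+b. \<integral>\<^sup>+c. ennreal (F (?\<alpha> (vector [c, b, a])) * indicator {c. c\<^sup>2 + b\<^sup>2 + a\<^sup>2 < 1} c) \<partial>lborel \<partial>lborel)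
        = (\<integral>\<^sup>+t. \<integral>\<^sup>+u. ?K a t u \<partial>lborel \<partial>lborel)"
      by eventually_elim (rule dihedral_angle_slab_substitution, simp_all)
  qed
  also have "\<dots> = (\<integral>\<^sup>+t. \<integral>\<^sup>+u. \<integral>\<^sup>+a. ?K a t u \<partial>lborel \<partial>lborel \<partial>lborel)"
  proof -
    have "(\<integral>\<^sup>+a. \<integral>\<^sup>+t. \<integral>\<^sup>+u. ?K a t u \<partial>lborel \<partial>lborel \<partial>lborel)
        = (\<integral>\<^sup>+t. \<integral>\<^sup>+a. \<integral>\<^sup>+u. ?K a t u \<partial>lborel \<partial>lborel \<partial>lborel)"
      by (rule lborel_pair.Fubini'[symmetric]) measurable
    also have "\<dots> = (\<integral>\<^sup>+t. \<integral>\<^sup>+u. \<integral>\<^sup>+a. ?K a t u \<partial>lborel \<partial>lborel \<partial>lborel)"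
      by (intro nn_integral_cong lborel_pair.Fubini'[symmetric]) measurable
    finally show ?thesis .
  qed
  also have "\<dots> = (\<integral>\<^sup>+t. \<integral>\<^sup>+u. ennreal (2/3) * ?P t u \<partial>lborel \<partial>lborel)"
    by (intro nn_integral_cong nn_integral_dihedral_height F_nonneg)
  also have "\<dots> = ennreal (2/3) * (\<integral>\<^sup>+t. \<integral>\<^sup>+u. ?P t u \<partial>lborel \<partial>lborel)"
    by (simp add: nn_integral_cmult)
  finally show ?thesis
    by (simp add: mult.assoc[symmetric] ennreal_mult[symmetric])
qed

lemma nn_integral_lborel_reflect:
  fixes f :: "real \<Rightarrow> ennreal"
  assumes [measurable]: "f \<in> borel_measurable borel"
  shows "(\<integral>\<^sup>+x. f (- x) \<partial>lborel) = (\<integral>\<^sup>+x. f x \<partial>lborel)"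
  using nn_integral_real_affine[of f "-1" 0] by simp

lemma nn_integral_lborel_even:
  fixes f :: "real \<Rightarrow> ennreal"
  assumes [measurable]: "f \<in> borel_measurable borel" and even: "\<And>x. f (- x) = f x"
  shows "(\<integral>\<^sup>+x. f x \<partial>lborel) = 2 * (\<integral>\<^sup>+x. f x * indicator {0..} x \<partial>lborel)"
proof -
  have "(\<integral>\<^sup>+x. f x \<partial>lborel) = (\<integral>\<^sup>+x. f x * indicator {0..} x + f x * indicator {..<0} x \<partial>lborel)"
    by (intro nn_integral_cong) (auto simp: indicator_def)
  also have "\<dots> = (\<integral>\<^sup>+x. f x * indicator {0..} x \<partial>lborel) + (\<integral>\<^sup>+x. f x * indicator {..<0} x \<partial>lborel)"
    by (rule nn_integral_add) measurable
  also have "(\<integral>\<^sup>+x. f x * indicator {..<0} x \<partial>lborel) = (\<integral>\<^sup>+x. f (- x) * indicator {..<0} (- x) \<partial>lborel)"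
    by (rule nn_integral_lborel_reflect[symmetric]) measurable
  also have "(\<integral>\<^sup>+x. f (- x) * indicator {..<0} (- x) \<partial>lborel) = (\<integral>\<^sup>+x. f x * indicator {0..} x \<partial>lborel)"
  proof (rule nn_integral_cong_AE)
    have "AE x in lborel. x \<noteq> (0::real)"
      by (rule AE_lborel_singleton)
    then show "AE x in lborel. f (- x) * indicator {..<0} (- x) = f x * indicator {0..} x"
      by eventually_elim (auto simp: even indicator_def)
  qed
  finally show ?thesis
    by (simp add: mult_2)
qed

lemma nn_integral_sphere_uniform_dihedral_angle_reflect:
  fixes F :: "real \<Rightarrow> real"
  assumes [measurable]: "F \<in> borel_measurable borel" and F_nonneg: "\<And>x. 0 \<le> F x"
  shows "(\<integral>\<^sup>+A. ennreal (F (pi - dihedral_angle A (vector [1, 0, 0]) (vector [0, 1, 0]))) \<partial>sphere_uniform)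
       = (\<integral>\<^sup>+A. ennreal (F (dihedral_angle A (vector [1, 0, 0]) (vector [0, 1, 0]))) \<partial>sphere_uniform)"
proof -
  have "(\<integral>\<^sup>+u. ennreal (F (pi - (pi/2 + arctan (u * t))) / (1 + t\<^sup>2) * indicator {-1<..<1} u) \<partial>lborel)
      = (\<integral>\<^sup>+u. ennreal (F (pi/2 + arctan (u * t)) / (1 + t\<^sup>2) * indicator {-1<..<1} u) \<partial>lborel)" for t
    by (subst nn_integral_lborel_reflect[symmetric])
      (auto simp: arctan_minus indicator_def intro!: nn_integral_cong)
  then show ?thesis
    using F_nonneg
    by (simp add: nn_integral_sphere_uniform_dihedral_angle[of "\<lambda>x. F (pi - x)"]
        nn_integral_sphere_uniform_dihedral_angle[of F])
qed

section \<open>The second moment of \<open>arctan (U T)\<close>\<close>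

lemma partial_fractions_three_quadratics:
  fixes s r x :: real
  defines "\<Delta> \<equiv> (1 - s\<^sup>2) * (1 - r\<^sup>2) * (s\<^sup>2 - r\<^sup>2)"
  assumes \<Delta>: "\<Delta> \<noteq> 0" and x: "0 \<le> x"
  shows "(r\<^sup>2 - s\<^sup>2) / \<Delta> / (1 + x) + s\<^sup>2 * (1 - r\<^sup>2) / \<Delta> / (1 + s\<^sup>2 * x) + - (r\<^sup>2 * (1 - s\<^sup>2)) / \<Delta> / (1 + r\<^sup>2 * x)
       = x / ((1 + x) * (1 + s\<^sup>2 * x) * (1 + r\<^sup>2 * x))"
proof -
  let ?p = "1 + x" and ?q = "1 + s\<^sup>2 * x" and ?w = "1 + r\<^sup>2 * x"
  have pos: "0 < ?p" "0 < ?q" "0 < ?w"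
    using x by (auto intro: add_pos_nonneg)
  have common_denominator: "a / p + b / q + c / w = (a * q * w + b * p * w + c * p * q) / (p * q * w)"
    if "p \<noteq> 0" "q \<noteq> 0" "w \<noteq> 0" for a b c p q w :: real
    using that by (simp add: field_simps)
  have "(r\<^sup>2 - s\<^sup>2) / \<Delta> / ?p + s\<^sup>2 * (1 - r\<^sup>2) / \<Delta> / ?q + - (r\<^sup>2 * (1 - s\<^sup>2)) / \<Delta> / ?w
      = ((r\<^sup>2 - s\<^sup>2) / \<Delta> * ?q * ?w + s\<^sup>2 * (1 - r\<^sup>2) / \<Delta> * ?p * ?w + - (r\<^sup>2 * (1 - s\<^sup>2)) / \<Delta> * ?p * ?q)
        / (?p * ?q * ?w)"
    using pos by (intro common_denominator) auto
  also have "(r\<^sup>2 - s\<^sup>2) / \<Delta> * ?q * ?w + s\<^sup>2 * (1 - r\<^sup>2) / \<Delta> * ?p * ?w + - (r\<^sup>2 * (1 - s\<^sup>2)) / \<Delta> * ?p * ?q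
      = ((r\<^sup>2 - s\<^sup>2) * ?q * ?w + s\<^sup>2 * (1 - r\<^sup>2) * ?p * ?w - r\<^sup>2 * (1 - s\<^sup>2) * ?p * ?q) / \<Delta>"
    using \<Delta> by (simp add: field_simps)
  also have "(r\<^sup>2 - s\<^sup>2) * ?q * ?w + s\<^sup>2 * (1 - r\<^sup>2) * ?p * ?w - r\<^sup>2 * (1 - s\<^sup>2) * ?p * ?q = \<Delta> * x"
    unfolding \<Delta>_def by algebra
  finally show ?thesis
    using \<Delta> by simp
qed

lemma nn_integral_square_div_three_quadratics:
  fixes s r :: real
  assumes sr: "0 < s" "0 < r" "s < 1" "r < 1" "s \<noteq> r"
  shows "(\<integral>\<^sup>+t. ennreal (t\<^sup>2 / ((1 + t\<^sup>2) * (1 + s\<^sup>2 * t\<^sup>2) * (1 + r\<^sup>2 * t\<^sup>2))) * indicator {0..} t \<partial>lborel)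
       = ennreal (pi / (2 * ((1 + s) * (1 + r) * (s + r))))"
proof -
  define \<Delta> where "\<Delta> = (1 - s\<^sup>2) * (1 - r\<^sup>2) * (s\<^sup>2 - r\<^sup>2)"
  define A where "A = (r\<^sup>2 - s\<^sup>2) / \<Delta>"
  define B where "B = s\<^sup>2 * (1 - r\<^sup>2) / \<Delta>"
  define C where "C = - (r\<^sup>2 * (1 - s\<^sup>2)) / \<Delta>"
  define G where "G t = A * arctan t + B * (arctan (s * t) / s) + C * (arctan (r * t) / r)" for t
  have \<Delta>_factor: "\<Delta> = ((s - r) * (1 - s) * (1 - r)) * ((1 + s) * (1 + r) * (s + r))"
    unfolding \<Delta>_def by algebra
  have \<Delta>: "\<Delta> \<noteq> 0"
    using sr unfolding \<Delta>_factor by simp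
  have partial_fractions:
    "A / (1 + t\<^sup>2) + B / (1 + s\<^sup>2 * t\<^sup>2) + C / (1 + r\<^sup>2 * t\<^sup>2)
       = t\<^sup>2 / ((1 + t\<^sup>2) * (1 + s\<^sup>2 * t\<^sup>2) * (1 + r\<^sup>2 * t\<^sup>2))" for t
    unfolding A_def B_def C_def using \<Delta> unfolding \<Delta>_def
    by (intro partial_fractions_three_quadratics) simp_all
  have DERIV_arctan_scaled: "DERIV (\<lambda>t. arctan (c * t) / c) t :> 1 / (1 + c\<^sup>2 * t\<^sup>2)"
    if "c \<noteq> 0" for c t :: real
    using that by (auto intro!: derivative_eq_intros simp: power_mult_distrib divide_inverse)
  have deriv: "DERIV G t :> t\<^sup>2 / ((1 + t\<^sup>2) * (1 + s\<^sup>2 * t\<^sup>2) * (1 + r\<^sup>2 * t\<^sup>2))" for t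
  proof -
    have "DERIV G t :> A * inverse (1 + t\<^sup>2) + B * (1 / (1 + s\<^sup>2 * t\<^sup>2)) + C * (1 / (1 + r\<^sup>2 * t\<^sup>2))"
      unfolding G_def[abs_def] using sr
      by (intro DERIV_add DERIV_cmult DERIV_arctan DERIV_arctan_scaled) auto
    also have "A * inverse (1 + t\<^sup>2) + B * (1 / (1 + s\<^sup>2 * t\<^sup>2)) + C * (1 / (1 + r\<^sup>2 * t\<^sup>2))
        = t\<^sup>2 / ((1 + t\<^sup>2) * (1 + s\<^sup>2 * t\<^sup>2) * (1 + r\<^sup>2 * t\<^sup>2))"
      unfolding partial_fractions[symmetric] by (simp add: divide_inverse)
    finally show ?thesis .
  qed
  have "((\<lambda>t. arctan (c * t)) \<longlongrightarrow> pi/2) at_top" if "0 < c" for c :: real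
    using that by (intro filterlim_compose[OF tendsto_arctan_at_top]
        filterlim_tendsto_pos_mult_at_top filterlim_ident) auto
  then have "(G \<longlongrightarrow> A * (pi/2) + B * (pi/2 / s) + C * (pi/2 / r)) at_top"
    unfolding G_def[abs_def] using sr by (intro tendsto_intros tendsto_arctan_at_top) auto
  then have "(\<integral>\<^sup>+t. ennreal (t\<^sup>2 / ((1 + t\<^sup>2) * (1 + s\<^sup>2 * t\<^sup>2) * (1 + r\<^sup>2 * t\<^sup>2))) * indicator {0..} t \<partial>lborel)
      = ennreal (A * (pi/2) + B * (pi/2 / s) + C * (pi/2 / r) - G 0)"
    by (intro nn_integral_FTC_atLeast deriv) (auto intro: add_pos_nonneg)
  also have "A * (pi/2) + B * (pi/2 / s) + C * (pi/2 / r) - G 0 = pi/2 * (A + B / s + C / r)"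
    by (simp add: G_def algebra_simps)
  also have "A + B / s + C / r = ((r\<^sup>2 - s\<^sup>2) + s * (1 - r\<^sup>2) - r * (1 - s\<^sup>2)) / \<Delta>"
    using sr by (simp add: A_def B_def C_def add_divide_distrib diff_divide_distrib power2_eq_square)
  also have "(r\<^sup>2 - s\<^sup>2) + s * (1 - r\<^sup>2) - r * (1 - s\<^sup>2) = (s - r) * (1 - s) * (1 - r)"
    by algebra
  also have "(s - r) * (1 - s) * (1 - r) / \<Delta> = 1 / ((1 + s) * (1 + r) * (s + r))"
    using sr unfolding \<Delta>_factor by simp
  finally show ?thesis
    by simp
qed

lemma arctan_eq_nn_integral:
  fixes u t :: real
  assumes "0 \<le> u" "0 \<le> t"
  shows "ennreal (arctan (u * t)) = (\<integral>\<^sup>+s. ennreal (t / (1 + s\<^sup>2 * t\<^sup>2)) * indicator {0..u} s \<partial>lborel)"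
proof -
  have "(\<integral>\<^sup>+s. ennreal (t / (1 + s\<^sup>2 * t\<^sup>2)) * indicator {0..u} s \<partial>lborel)
      = ennreal (arctan (u * t) - arctan (0 * t))"
    by (rule nn_integral_FTC_Icc)
      (use assms in \<open>auto intro!: derivative_eq_intros simp: add_pos_nonneg power2_eq_square field_simps\<close>)
  then show ?thesis
    by simp
qed

lemma nn_integral_mult_nn_integral:
  assumes [measurable]: "f \<in> borel_measurable M" "g \<in> borel_measurable N"
  shows "(\<integral>\<^sup>+x. f x \<partial>M) * (\<integral>\<^sup>+y. g y \<partial>N) = (\<integral>\<^sup>+x. \<integral>\<^sup>+y. f x * g y \<partial>N \<partial>M)"
proof -
  have "(\<integral>\<^sup>+x. f x \<partial>M) * (\<integral>\<^sup>+y. g y \<partial>N) = (\<integral>\<^sup>+x. f x * (\<integral>\<^sup>+y. g y \<partial>N) \<partial>M)"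
    by (rule nn_integral_multc[symmetric]) simp
  also have "\<dots> = (\<integral>\<^sup>+x. \<integral>\<^sup>+y. f x * g y \<partial>N \<partial>M)"
    by (intro nn_integral_cong nn_integral_cmult[symmetric]) simp
  finally show ?thesis .
qed

lemma arctan_square_div_eq_nn_integral:
  fixes u t :: real
  assumes u: "0 \<le> u"
  shows "ennreal ((arctan (u * t))\<^sup>2 / (1 + t\<^sup>2)) * indicator {0..} t
       = (\<integral>\<^sup>+s. \<integral>\<^sup>+r. ennreal (t\<^sup>2 / ((1 + t\<^sup>2) * (1 + s\<^sup>2 * t\<^sup>2) * (1 + r\<^sup>2 * t\<^sup>2)))
                      * indicator {0..u} s * indicator {0..u} r * indicator {0..} t \<partial>lborel \<partial>lborel)"
proof (cases "0 \<le> t")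
  case True
  let ?f = "\<lambda>s. ennreal (t / (1 + s\<^sup>2 * t\<^sup>2)) * indicator {0..u} s"
  have "ennreal ((arctan (u * t))\<^sup>2 / (1 + t\<^sup>2))
      = ennreal (1 / (1 + t\<^sup>2)) * (ennreal (arctan (u * t)) * ennreal (arctan (u * t)))"
    using u True by (simp add: ennreal_mult[symmetric] power2_eq_square add_pos_nonneg)
  also have "\<dots> = ennreal (1 / (1 + t\<^sup>2)) * (\<integral>\<^sup>+s. \<integral>\<^sup>+r. ?f s * ?f r \<partial>lborel \<partial>lborel)"
    using u True by (simp add: arctan_eq_nn_integral nn_integral_mult_nn_integral)
  also have "\<dots> = (\<integral>\<^sup>+s. \<integral>\<^sup>+r. ennreal (1 / (1 + t\<^sup>2)) * (?f s * ?f r) \<partial>lborel \<partial>lborel)"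
    by (simp add: nn_integral_cmult[symmetric])
  also have "\<dots> = (\<integral>\<^sup>+s. \<integral>\<^sup>+r. ennreal (t\<^sup>2 / ((1 + t\<^sup>2) * (1 + s\<^sup>2 * t\<^sup>2) * (1 + r\<^sup>2 * t\<^sup>2)))
                      * indicator {0..u} s * indicator {0..u} r * indicator {0..} t \<partial>lborel \<partial>lborel)"
    using True
    by (intro nn_integral_cong)
      (auto simp: indicator_def ennreal_mult[symmetric] add_pos_nonneg power2_eq_square field_simps)
  finally show ?thesis
    using True by simp
qed simp

lemma nn_integral_arctan_square_div:
  fixes u :: real
  assumes u: "0 \<le> u" "u < 1"
  shows "(\<integral>\<^sup>+t. ennreal ((arctan (u * t))\<^sup>2 / (1 + t\<^sup>2)) * indicator {0..} t \<partial>lborel)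
       = (\<integral>\<^sup>+s. \<integral>\<^sup>+r. ennreal (pi / (2 * ((1 + s) * (1 + r) * (s + r))))
                         * indicator {0..u} s * indicator {0..u} r \<partial>lborel \<partial>lborel)"
proof -
  let ?k = "\<lambda>t s r. ennreal (t\<^sup>2 / ((1 + t\<^sup>2) * (1 + s\<^sup>2 * t\<^sup>2) * (1 + r\<^sup>2 * t\<^sup>2)))
                      * indicator {0..u} s * indicator {0..u} r * indicator {0..} t"
  have "(\<integral>\<^sup>+t. ennreal ((arctan (u * t))\<^sup>2 / (1 + t\<^sup>2)) * indicator {0..} t \<partial>lborel)
      = (\<integral>\<^sup>+t. \<integral>\<^sup>+s. \<integral>\<^sup>+r. ?k t s r \<partial>lborel \<partial>lborel \<partial>lborel)"
    by (simp only: arctan_square_div_eq_nn_integral[OF u(1)])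
  also have "\<dots> = (\<integral>\<^sup>+s. \<integral>\<^sup>+r. \<integral>\<^sup>+t. ?k t s r \<partial>lborel \<partial>lborel \<partial>lborel)"
  proof -
    have "(\<integral>\<^sup>+t. \<integral>\<^sup>+s. \<integral>\<^sup>+r. ?k t s r \<partial>lborel \<partial>lborel \<partial>lborel)
        = (\<integral>\<^sup>+s. \<integral>\<^sup>+t. \<integral>\<^sup>+r. ?k t s r \<partial>lborel \<partial>lborel \<partial>lborel)"
      by (rule lborel_pair.Fubini'[symmetric]) measurable
    also have "\<dots> = (\<integral>\<^sup>+s. \<integral>\<^sup>+r. \<integral>\<^sup>+t. ?k t s r \<partial>lborel \<partial>lborel \<partial>lborel)"
      by (intro nn_integral_cong lborel_pair.Fubini'[symmetric]) measurable
    finally show ?thesis .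
  qed
  also have "\<dots> = (\<integral>\<^sup>+s. \<integral>\<^sup>+r. ennreal (pi / (2 * ((1 + s) * (1 + r) * (s + r))))
                         * indicator {0..u} s * indicator {0..u} r \<partial>lborel \<partial>lborel)"
  proof (rule nn_integral_cong_AE)
    have "AE s in lborel. s \<noteq> (0::real)"
      by (rule AE_lborel_singleton)
    then show "AE s in lborel. (\<integral>\<^sup>+r. \<integral>\<^sup>+t. ?k t s r \<partial>lborel \<partial>lborel)
        = (\<integral>\<^sup>+r. ennreal (pi / (2 * ((1 + s) * (1 + r) * (s + r)))) * indicator {0..u} s * indicator {0..u} r \<partial>lborel)"
    proof eventually_elim
      case (elim s)
      have "AE r in lborel. r \<noteq> (0::real)" "AE r in lborel. r \<noteq> s"
        by (rule AE_lborel_singleton)+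
      then show ?case
      proof (intro nn_integral_cong_AE, eventually_elim)
        case (elim r)
        show ?case
        proof (cases "s \<in> {0..u} \<and> r \<in> {0..u}")
          case True
          then have sr: "0 < s" "0 < r" "s < 1" "r < 1" "s \<noteq> r"
            using u \<open>s \<noteq> 0\<close> elim by auto
          have "(\<integral>\<^sup>+t. ?k t s r \<partial>lborel) = (\<integral>\<^sup>+t. ennreal (t\<^sup>2 / ((1 + t\<^sup>2) * (1 + s\<^sup>2 * t\<^sup>2) * (1 + r\<^sup>2 * t\<^sup>2)))
              * indicator {0..} t \<partial>lborel)"
            using True by (intro nn_integral_cong) simp
          then show ?thesis
            using True by (simp add: nn_integral_square_div_three_quadratics[OF sr])
        qed auto
      qed
    qed
  qed
  finally show ?thesis .
qed

lemma nn_integral_symmetric_square: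
  fixes f :: "real \<Rightarrow> real \<Rightarrow> ennreal" and u :: real
  assumes [measurable]: "(\<lambda>(s, r). f s r) \<in> borel_measurable (lborel \<Otimes>\<^sub>M lborel)"
    and sym: "\<And>s r. f s r = f r s"
  shows "(\<integral>\<^sup>+s. \<integral>\<^sup>+r. f s r * indicator {0..u} s * indicator {0..u} r \<partial>lborel \<partial>lborel)
       = 2 * (\<integral>\<^sup>+s. \<integral>\<^sup>+r. f s r * indicator {0..u} s * indicator {0..s} r \<partial>lborel \<partial>lborel)"
proof -
  define below where "below s r = f s r * indicator {0..u} s * indicator {0..s} r" for s r
  define above where "above s r = f s r * indicator {0..u} r * indicator {0..<r} s" for s r
  have "(\<lambda>(s, r). below s r) = (\<lambda>(s, r). f s r * (if 0 \<le> s \<and> s \<le> u \<and> 0 \<le> r \<and> r \<le> s then 1 else 0))"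
    by (auto simp: below_def indicator_def fun_eq_iff)
  then have below_m [measurable]: "(\<lambda>(s, r). below s r) \<in> borel_measurable (lborel \<Otimes>\<^sub>M lborel)"
    by simp
  have "(\<lambda>(s, r). above s r) = (\<lambda>(s, r). f s r * (if 0 \<le> r \<and> r \<le> u \<and> 0 \<le> s \<and> s < r then 1 else 0))"
    by (auto simp: above_def indicator_def fun_eq_iff)
  then have above_m [measurable]: "(\<lambda>(s, r). above s r) \<in> borel_measurable (lborel \<Otimes>\<^sub>M lborel)"
    by simp
  have "(\<integral>\<^sup>+s. \<integral>\<^sup>+r. f s r * indicator {0..u} s * indicator {0..u} r \<partial>lborel \<partial>lborel)
      = (\<integral>\<^sup>+s. \<integral>\<^sup>+r. below s r + above s r \<partial>lborel \<partial>lborel)"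
    by (intro nn_integral_cong) (auto simp: below_def above_def indicator_def)
  also have "\<dots> = (\<integral>\<^sup>+s. (\<integral>\<^sup>+r. below s r \<partial>lborel) + (\<integral>\<^sup>+r. above s r \<partial>lborel) \<partial>lborel)"
    using measurable_Pair2[OF below_m] measurable_Pair2[OF above_m]
    by (intro nn_integral_cong nn_integral_add) simp_all
  also have "\<dots> = (\<integral>\<^sup>+s. \<integral>\<^sup>+r. below s r \<partial>lborel \<partial>lborel) + (\<integral>\<^sup>+s. \<integral>\<^sup>+r. above s r \<partial>lborel \<partial>lborel)"
    by (rule nn_integral_add) measurable
  also have "(\<integral>\<^sup>+s. \<integral>\<^sup>+r. above s r \<partial>lborel \<partial>lborel) = (\<integral>\<^sup>+r. \<integral>\<^sup>+s. above s r \<partial>lborel \<partial>lborel)"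
    by (rule lborel_pair.Fubini'[symmetric]) measurable
  also have "\<dots> = (\<integral>\<^sup>+s. \<integral>\<^sup>+r. below s r \<partial>lborel \<partial>lborel)"
  proof (rule nn_integral_cong, rule nn_integral_cong_AE)
    fix s :: real
    have "AE r in lborel. r \<noteq> s"
      by (rule AE_lborel_singleton)
    then show "AE r in lborel. above r s = below s r"
      by eventually_elim (auto simp: below_def above_def sym indicator_def)
  qed
  finally show ?thesis
    by (simp add: below_def mult_2)
qed

lemma nn_integral_div_three_linear:
  fixes s :: real
  assumes s: "0 < s" "s < 1"
  shows "(\<integral>\<^sup>+r. ennreal (pi / (2 * ((1 + s) * (1 + r) * (s + r)))) * indicator {0..s} r \<partial>lborel)
       = ennreal (pi/2 * (ln 2 - ln (1 + s)) / ((1 + s) * (1 - s)))"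
proof -
  define k where "k = pi / (2 * (1 + s) * (1 - s))"
  define G where "G r = k * (ln (s + r) - ln (1 + r))" for r
  have deriv: "DERIV G r :> pi / (2 * ((1 + s) * (1 + r) * (s + r)))" if "r \<in> {0..s}" for r
  proof -
    have p: "0 < s + r" "0 < 1 + r" "0 < 1 - s" "0 < 1 + s"
      using s that by auto
    have "DERIV G r :> k * (1 / (s + r) - 1 / (1 + r))"
      unfolding G_def[abs_def] using p by (auto intro!: derivative_eq_intros)
    also have "1 / (s + r) - 1 / (1 + r) = (1 - s) / ((s + r) * (1 + r))"
      using p by (simp add: field_simps)
    also have "k * ((1 - s) / ((s + r) * (1 + r))) = pi / (2 * ((1 + s) * (1 + r) * (s + r)))"
    proof -
      have "pi / (2 * a * b) * (b / (c * d)) = pi / (2 * (a * d * c))"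
        if "a \<noteq> 0" "b \<noteq> 0" "c \<noteq> 0" "d \<noteq> 0" for a b c d :: real
        using that by (simp add: field_simps)
      then show ?thesis
        using p unfolding k_def by simp
    qed
    finally show ?thesis .
  qed
  have "(\<integral>\<^sup>+r. ennreal (pi / (2 * ((1 + s) * (1 + r) * (s + r)))) * indicator {0..s} r \<partial>lborel)
      = ennreal (G s - G 0)"
    using s deriv by (intro nn_integral_FTC_Icc) auto
  also have "G s - G 0 = k * (ln (2 * s) - ln (1 + s) - ln s)"
    by (simp add: G_def algebra_simps mult_2)
  also have "\<dots> = pi/2 * (ln 2 - ln (1 + s)) / ((1 + s) * (1 - s))"
    using s by (simp add: k_def ln_mult)
  finally show ?thesis .
qed

lemma nn_integral_repeated_unit_interval:
  fixes g :: "real \<Rightarrow> ennreal"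
  assumes [measurable]: "g \<in> borel_measurable borel"
  shows "(\<integral>\<^sup>+u. \<integral>\<^sup>+s. g s * indicator {0..u} s * indicator {0..<1} u \<partial>lborel \<partial>lborel)
       = (\<integral>\<^sup>+s. g s * ennreal (1 - s) * indicator {0..<1} s \<partial>lborel)"
proof -
  have "(\<lambda>(u, s). g s * indicator {0..u} s * indicator {0..<1} u)
      = (\<lambda>(u, s). g s * (if 0 \<le> s \<and> s \<le> u \<and> u < 1 then 1 else 0))"
    by (auto simp: indicator_def fun_eq_iff)
  then have [measurable]:
    "(\<lambda>(u, s). g s * indicator {0..u} s * indicator {0..<1} u) \<in> borel_measurable (lborel \<Otimes>\<^sub>M lborel)"
    by simp
  have "(\<integral>\<^sup>+u. \<integral>\<^sup>+s. g s * indicator {0..u} s * indicator {0..<1} u \<partial>lborel \<partial>lborel)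
      = (\<integral>\<^sup>+s. \<integral>\<^sup>+u. g s * indicator {0..u} s * indicator {0..<1} u \<partial>lborel \<partial>lborel)"
    by (rule lborel_pair.Fubini') measurable
  also have "\<dots> = (\<integral>\<^sup>+s. g s * ennreal (1 - s) * indicator {0..<1} s \<partial>lborel)"
  proof (rule nn_integral_cong)
    fix s :: real
    show "(\<integral>\<^sup>+u. g s * indicator {0..u} s * indicator {0..<1} u \<partial>lborel) = g s * ennreal (1 - s) * indicator {0..<1} s"
    proof (cases "0 \<le> s")
      case True
      then have "(\<integral>\<^sup>+u. g s * indicator {0..u} s * indicator {0..<1} u \<partial>lborel) = (\<integral>\<^sup>+u. g s * indicator {s..<1} u \<partial>lborel)"
        by (intro nn_integral_cong) (auto simp: indicator_def)
      also have "\<dots> = g s * emeasure lborel {s..<1}"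
        by (rule nn_integral_cmult_indicator) simp
      also have "emeasure lborel {s..<1} = ennreal (1 - s) * indicator {0..<1} s"
        using True by (cases "s < 1") (auto simp: indicator_def)
      finally show ?thesis
        by (simp add: mult.assoc)
    qed (simp add: indicator_def)
  qed
  finally show ?thesis .
qed

lemma nn_integral_log_div:
  "(\<integral>\<^sup>+s. ennreal (pi/2 * (ln 2 - ln (1 + s)) / (1 + s)) * indicator {0..<1} s \<partial>lborel) = ennreal (pi/4 * (ln 2)\<^sup>2)"
proof -
  define G where "G s = pi/2 * (ln 2 * ln (1 + s) - ln (1 + s) * ln (1 + s) / 2)" for s :: real
  have "(\<integral>\<^sup>+s. ennreal (pi/2 * (ln 2 - ln (1 + s)) / (1 + s)) * indicator {0..<1} s \<partial>lborel)
      = (\<integral>\<^sup>+s. ennreal (pi/2 * (ln 2 - ln (1 + s)) / (1 + s) * indicator {0<..<1} s) \<partial>lborel)"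
  proof (rule nn_integral_cong_AE)
    have "AE s in lborel. s \<noteq> (0::real)"
      by (rule AE_lborel_singleton)
    then show "AE s in lborel. ennreal (pi/2 * (ln 2 - ln (1 + s)) / (1 + s)) * indicator {0..<1} s
        = ennreal (pi/2 * (ln 2 - ln (1 + s)) / (1 + s) * indicator {0<..<1} s)"
      by eventually_elim (auto simp: indicator_def)
  qed
  also have "\<dots> = (\<integral>\<^sup>+s. ennreal (pi/2 * (ln 2 - ln (1 + s)) / (1 + s)) * indicator {0..1} s \<partial>lborel)"
    by (subst nn_integral_open_interval_eq_closed) (auto intro!: nn_integral_cong split: split_indicator)
  also have "\<dots> = ennreal (G 1 - G 0)"
  proof (rule nn_integral_FTC_Icc)
    show "DERIV G s :> pi/2 * (ln 2 - ln (1 + s)) / (1 + s)" if "s \<in> {0..1}" for s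
    proof -
      have "DERIV (\<lambda>s. ln (1 + s)) s :> 1 / (1 + s)"
        using that by (auto intro!: derivative_eq_intros simp: inverse_eq_divide)
      then have D: "DERIV G s :> pi/2 * (ln 2 * (1 / (1 + s))
          - (1 / (1 + s) * ln (1 + s) + 1 / (1 + s) * ln (1 + s)) / 2)"
        unfolding G_def[abs_def] by (intro DERIV_cmult DERIV_diff DERIV_cdivide DERIV_mult)
      have simplify: "pi/2 * (A * (1 / q) - (1 / q * L + 1 / q * L) / 2) = pi/2 * (A - L) / q"
        if "q \<noteq> 0" for A L q :: real
        using that by (simp add: field_simps)
      have "pi/2 * (ln 2 * (1 / (1 + s)) - (1 / (1 + s) * ln (1 + s) + 1 / (1 + s) * ln (1 + s)) / 2)
          = pi/2 * (ln 2 - ln (1 + s)) / (1 + s)"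
        by (rule simplify) (use that in auto)
      with D show ?thesis
        by (simp only:)
    qed
    show "0 \<le> pi/2 * (ln 2 - ln (1 + s)) / (1 + s)" if "s \<in> {0..1}" for s
      using that by (auto intro!: divide_nonneg_pos mult_nonneg_nonneg)
  qed simp_all
  also have "G 1 - G 0 = pi/4 * (ln 2)\<^sup>2"
    by (simp add: G_def power2_eq_square)
  finally show ?thesis .
qed

lemma nn_integral_arctan_square_div_halfline:
  fixes u :: real
  assumes u: "0 \<le> u" "u < 1"
  shows "(\<integral>\<^sup>+t. ennreal ((arctan (u * t))\<^sup>2 / (1 + t\<^sup>2)) * indicator {0..} t \<partial>lborel)
       = 2 * (\<integral>\<^sup>+s. ennreal (pi/2 * (ln 2 - ln (1 + s)) / ((1 + s) * (1 - s))) * indicator {0..u} s \<partial>lborel)"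
proof -
  let ?\<psi> = "\<lambda>s r. ennreal (pi / (2 * ((1 + s) * (1 + r) * (s + r))))"
  have "(\<integral>\<^sup>+t. ennreal ((arctan (u * t))\<^sup>2 / (1 + t\<^sup>2)) * indicator {0..} t \<partial>lborel)
      = (\<integral>\<^sup>+s. \<integral>\<^sup>+r. ?\<psi> s r * indicator {0..u} s * indicator {0..u} r \<partial>lborel \<partial>lborel)"
    using u by (rule nn_integral_arctan_square_div)
  also have "\<dots> = 2 * (\<integral>\<^sup>+s. \<integral>\<^sup>+r. ?\<psi> s r * indicator {0..u} s * indicator {0..s} r \<partial>lborel \<partial>lborel)"
    by (rule nn_integral_symmetric_square) (simp_all add: ac_simps)
  also have "(\<integral>\<^sup>+s. \<integral>\<^sup>+r. ?\<psi> s r * indicator {0..u} s * indicator {0..s} r \<partial>lborel \<partial>lborel)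
      = (\<integral>\<^sup>+s. ennreal (pi/2 * (ln 2 - ln (1 + s)) / ((1 + s) * (1 - s))) * indicator {0..u} s \<partial>lborel)"
  proof (rule nn_integral_cong_AE)
    have "AE s in lborel. s \<noteq> (0::real)"
      by (rule AE_lborel_singleton)
    then show "AE s in lborel. (\<integral>\<^sup>+r. ?\<psi> s r * indicator {0..u} s * indicator {0..s} r \<partial>lborel)
        = ennreal (pi/2 * (ln 2 - ln (1 + s)) / ((1 + s) * (1 - s))) * indicator {0..u} s"
    proof eventually_elim
      case (elim s)
      show ?case
      proof (cases "s \<in> {0..u}")
        case True
        then have "0 < s" "s < 1"
          using elim u by auto
        then show ?thesis
          using True by (simp add: nn_integral_div_three_linear)
      qed simp
    qed
  qed
  finally show ?thesis .
qed

lemma nn_integral_arctan_square_div_quadrant: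
  "(\<integral>\<^sup>+u. (\<integral>\<^sup>+t. ennreal ((arctan (u * t))\<^sup>2 / (1 + t\<^sup>2)) * indicator {0..} t \<partial>lborel)
            * indicator {0..<1} u \<partial>lborel)
     = ennreal (pi/2 * (ln 2)\<^sup>2)"
proof -
  let ?\<phi> = "\<lambda>s. ennreal (pi/2 * (ln 2 - ln (1 + s)) / ((1 + s) * (1 - s)))"
  have "(\<integral>\<^sup>+u. (\<integral>\<^sup>+t. ennreal ((arctan (u * t))\<^sup>2 / (1 + t\<^sup>2)) * indicator {0..} t \<partial>lborel)
            * indicator {0..<1} u \<partial>lborel)
      = (\<integral>\<^sup>+u. \<integral>\<^sup>+s. 2 * ?\<phi> s * indicator {0..u} s * indicator {0..<1} u \<partial>lborel \<partial>lborel)"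
  proof (rule nn_integral_cong)
    fix u :: real
    show "(\<integral>\<^sup>+t. ennreal ((arctan (u * t))\<^sup>2 / (1 + t\<^sup>2)) * indicator {0..} t \<partial>lborel) * indicator {0..<1} u
        = (\<integral>\<^sup>+s. 2 * ?\<phi> s * indicator {0..u} s * indicator {0..<1} u \<partial>lborel)"
      by (cases "u \<in> {0..<1}")
        (simp_all add: nn_integral_arctan_square_div_halfline nn_integral_cmult[symmetric] mult.assoc)
  qed
  also have "\<dots> = (\<integral>\<^sup>+s. 2 * ?\<phi> s * ennreal (1 - s) * indicator {0..<1} s \<partial>lborel)"
    by (rule nn_integral_repeated_unit_interval) measurable
  also have "\<dots> = 2 * (\<integral>\<^sup>+s. ennreal (pi/2 * (ln 2 - ln (1 + s)) / (1 + s)) * indicator {0..<1} s \<partial>lborel)"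
  proof (subst nn_integral_cmult[symmetric], measurable, rule nn_integral_cong)
    fix s :: real
    show "2 * ?\<phi> s * ennreal (1 - s) * indicator {0..<1} s
        = 2 * (ennreal (pi/2 * (ln 2 - ln (1 + s)) / (1 + s)) * indicator {0..<1} s)"
    proof (cases "s \<in> {0..<1}")
      case True
      then have "0 \<le> pi/2 * (ln 2 - ln (1 + s)) / ((1 + s) * (1 - s))"
        by (auto intro!: divide_nonneg_pos mult_nonneg_nonneg)
      moreover have "pi/2 * (ln 2 - ln (1 + s)) / ((1 + s) * (1 - s)) * (1 - s)
          = pi/2 * (ln 2 - ln (1 + s)) / (1 + s)"
        using True by simp
      ultimately show ?thesis
        using True by (simp add: ennreal_mult'[symmetric] mult.assoc)
    qed simp
  qed
  also have "\<dots> = 2 * ennreal (pi/4 * (ln 2)\<^sup>2)"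
    by (simp only: nn_integral_log_div)
  finally show ?thesis
    using ennreal_mult'[of 2 "pi/4 * (ln 2)\<^sup>2"] by simp
qed

lemma nn_integral_arctan_square:
  "(\<integral>\<^sup>+t. \<integral>\<^sup>+u. ennreal ((arctan (u * t))\<^sup>2 / (1 + t\<^sup>2) * indicator {-1<..<1} u) \<partial>lborel \<partial>lborel)
     = ennreal (2 * pi * (ln 2)\<^sup>2)"
proof -
  let ?h = "\<lambda>u. \<integral>\<^sup>+t. ennreal ((arctan (u * t))\<^sup>2 / (1 + t\<^sup>2)) * indicator {0..} t \<partial>lborel"
  have "(\<integral>\<^sup>+t. \<integral>\<^sup>+u. ennreal ((arctan (u * t))\<^sup>2 / (1 + t\<^sup>2) * indicator {-1<..<1} u) \<partial>lborel \<partial>lborel)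
      = (\<integral>\<^sup>+u. \<integral>\<^sup>+t. ennreal ((arctan (u * t))\<^sup>2 / (1 + t\<^sup>2) * indicator {-1<..<1} u) \<partial>lborel \<partial>lborel)"
    by (rule lborel_pair.Fubini'[symmetric]) measurable
  also have "\<dots> = (\<integral>\<^sup>+u. 2 * ?h u * indicator {-1<..<1} u \<partial>lborel)"
  proof (rule nn_integral_cong)
    fix u :: real
    have "(\<integral>\<^sup>+t. ennreal ((arctan (u * t))\<^sup>2 / (1 + t\<^sup>2) * indicator {-1<..<1} u) \<partial>lborel)
        = 2 * (\<integral>\<^sup>+t. ennreal ((arctan (u * t))\<^sup>2 / (1 + t\<^sup>2) * indicator {-1<..<1} u) * indicator {0..} t \<partial>lborel)"
      by (rule nn_integral_lborel_even) (simp_all add: arctan_minus)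
    also have "\<dots> = 2 * ?h u * indicator {-1<..<1} u"
      by (cases "u \<in> {-1<..<1}") (simp_all add: mult.assoc)
    finally show "(\<integral>\<^sup>+t. ennreal ((arctan (u * t))\<^sup>2 / (1 + t\<^sup>2) * indicator {-1<..<1} u) \<partial>lborel)
        = 2 * ?h u * indicator {-1<..<1} u" .
  qed
  also have "\<dots> = 2 * (\<integral>\<^sup>+u. 2 * ?h u * indicator {-1<..<1} u * indicator {0..} u \<partial>lborel)"
    by (rule nn_integral_lborel_even) (auto simp: arctan_minus indicator_def)
  also have "(\<integral>\<^sup>+u. 2 * ?h u * indicator {-1<..<1} u * indicator {0..} u \<partial>lborel)
      = 2 * (\<integral>\<^sup>+u. ?h u * indicator {0..<1} u \<partial>lborel)"
    by (subst nn_integral_cmult[symmetric]) (auto intro!: nn_integral_cong simp: indicator_def)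
  finally show ?thesis
    using ennreal_mult'[of 4 "pi/2 * (ln 2)\<^sup>2"]
    by (simp add: nn_integral_arctan_square_div_quadrant mult.assoc)
qed

section \<open>Moments of the dihedral angle\<close>

lemma integrable_sphere_uniform_dihedral_angle_power:
  "integrable sphere_uniform (\<lambda>A. (dihedral_angle A B C) ^ n)"
proof -
  interpret prob_space sphere_uniform
    by (rule prob_space_sphere_uniform)
  show ?thesis
  proof (rule integrable_const_bound)
    show "AE A in sphere_uniform. norm ((dihedral_angle A B C) ^ n) \<le> pi ^ n"
      using dihedral_angle_bounds by (auto intro!: power_mono simp: norm_power)
  qed measurable
qed

lemma integral_sphere_uniform_dihedral_angle:
  "(\<integral>A. dihedral_angle A (vector [1, 0, 0]) (vector [0, 1, 0]) \<partial>sphere_uniform) = pi / 2"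
proof -
  interpret prob_space sphere_uniform
    by (rule prob_space_sphere_uniform)
  let ?\<alpha> = "\<lambda>A. dihedral_angle A (vector [1, 0, 0]) (vector [0, 1, 0])"
  have integrable: "integrable sphere_uniform ?\<alpha>"
    using integrable_sphere_uniform_dihedral_angle_power[where n = 1] by simp
  have "(\<integral>A. pi - ?\<alpha> A \<partial>sphere_uniform) = enn2real (\<integral>\<^sup>+A. ennreal \<bar>pi - ?\<alpha> A\<bar> \<partial>sphere_uniform)"
    using dihedral_angle_bounds by (subst integral_eq_nn_integral) auto
  also have "\<dots> = enn2real (\<integral>\<^sup>+A. ennreal \<bar>?\<alpha> A\<bar> \<partial>sphere_uniform)"
    by (subst nn_integral_sphere_uniform_dihedral_angle_reflect) auto
  also have "\<dots> = (\<integral>A. ?\<alpha> A \<partial>sphere_uniform)"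
    using dihedral_angle_bounds by (subst integral_eq_nn_integral) auto
  finally have "pi - (\<integral>A. ?\<alpha> A \<partial>sphere_uniform) = (\<integral>A. ?\<alpha> A \<partial>sphere_uniform)"
    using integrable by (simp add: prob_space)
  then show ?thesis
    by simp
qed

lemma integral_sphere_uniform_dihedral_angle_deviation:
  "(\<integral>A. (dihedral_angle A (vector [1, 0, 0]) (vector [0, 1, 0]) - pi/2)\<^sup>2 \<partial>sphere_uniform) = (ln 2)\<^sup>2"
proof -
  have "(\<integral>A. (dihedral_angle A (vector [1, 0, 0]) (vector [0, 1, 0]) - pi/2)\<^sup>2 \<partial>sphere_uniform)
      = enn2real (\<integral>\<^sup>+A. ennreal ((dihedral_angle A (vector [1, 0, 0]) (vector [0, 1, 0]) - pi/2)\<^sup>2) \<partial>sphere_uniform)"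
    by (subst integral_eq_nn_integral) auto
  also have "\<dots> = enn2real (ennreal (1 / (2*pi)) * (\<integral>\<^sup>+t. \<integral>\<^sup>+u.
      ennreal ((pi/2 + arctan (u * t) - pi/2)\<^sup>2 / (1 + t\<^sup>2) * indicator {-1<..<1} u) \<partial>lborel \<partial>lborel))"
    by (subst nn_integral_sphere_uniform_dihedral_angle) simp_all
  also have "\<dots> = enn2real (ennreal (1 / (2*pi)) * ennreal (2 * pi * (ln 2)\<^sup>2))"
    by (simp only: add_diff_cancel_left' nn_integral_arctan_square)
  also have "\<dots> = (ln 2)\<^sup>2"
    by (simp add: ennreal_mult[symmetric])
  finally show ?thesis .
qed

theorem mainTheorem7:
  defines "B \<equiv> vector [1, 0, 0] :: real^3"
      and "C \<equiv> vector [0, 1, 0] :: real^3"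
  shows "integrable sphere_uniform (\<lambda>A. dihedral_angle A B C)
       \<and> (\<integral>A. dihedral_angle A B C \<partial>sphere_uniform) = pi / 2
       \<and> integrable sphere_uniform (\<lambda>A. (dihedral_angle A B C)\<^sup>2)
       \<and> (\<integral>A. (dihedral_angle A B C)\<^sup>2 \<partial>sphere_uniform) = pi\<^sup>2 / 4 + (ln 2)\<^sup>2"
proof -
  interpret prob_space sphere_uniform
    by (rule prob_space_sphere_uniform)
  have integrable: "integrable sphere_uniform (\<lambda>A. (dihedral_angle A B C) ^ n)" for n
    by (rule integrable_sphere_uniform_dihedral_angle_power)
  have mean: "(\<integral>A. dihedral_angle A B C \<partial>sphere_uniform) = pi / 2"
    unfolding B_def C_def by (rule integral_sphere_uniform_dihedral_angle)
  have deviation: "(\<integral>A. (dihedral_angle A B C - pi/2)\<^sup>2 \<partial>sphere_uniform) = (ln 2)\<^sup>2"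
    unfolding B_def C_def by (rule integral_sphere_uniform_dihedral_angle_deviation)
  have "(dihedral_angle A B C)\<^sup>2 = (dihedral_angle A B C - pi/2)\<^sup>2 + pi * dihedral_angle A B C - pi\<^sup>2 / 4" for A
    by (simp add: power2_eq_square algebra_simps)
  then have "(\<integral>A. (dihedral_angle A B C)\<^sup>2 \<partial>sphere_uniform)
      = (\<integral>A. (dihedral_angle A B C - pi/2)\<^sup>2 \<partial>sphere_uniform) + pi * (\<integral>A. dihedral_angle A B C \<partial>sphere_uniform) - pi\<^sup>2 / 4"
    using integrable[of 1] integrable[of 2] by (simp add: prob_space power2_diff integral_diff integral_add)
  also have "\<dots> = pi\<^sup>2 / 4 + (ln 2)\<^sup>2"
    unfolding mean deviation by (simp add: power2_eq_square)
  finally show ?thesis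
    using mean integrable[of 1] integrable[of 2] by simp
qed

end
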